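(* Let $(\Omega,\mathcal F,\mu)$ be a measure space, $p\in[1,\infty)$ and $\mathscr A\subset L^p(\Omega,\mathcal F,\mu)$. The following are equivalent: (i) $\mathscr A$ is uniformly approximable in $L^p$; (ii) $\lim_{k\to\infty}\sup_{f\in\mathscr A}\mathrm{Var}_{p,k}(f)=0$. In this case, setting $r_\varepsilon(\mathscr A)=\min\{k\in\mathbb N:\ \sup_{f\in\mathscr A}\mathrm{Var}_{p,k}(f)\le\varepsilon\}$, one has $r_{2\varepsilon}(\mathscr A)\le N_{p,\varepsilon}(\mathscr A)\le r_\varepsilon(\mathscr A)+1$ for every $\varepsilon>0$. If moreover $\mu$ is finite, (i) and (ii) are equivalent to (iii) $\lim_{k\to\infty}\sup_{f\in\mathscr A}\mathrm{Var}_{p,k}(f,\Omega)=0$, and with $m_\varepsilon(\mathscr A)=\min\{k\in\mathbb N:\ \sup_{f\in\mathscr A}\mathrm{Var}_{p,k}(f,\Omega)\le\varepsilon\}$ one has $m_{2\varepsilon}(\mathscr A)\le r_{2\varepsilon}(\mathscr A)\le N_{p,\varepsilon}(\mathscr A)\le m_\varepsilon(\mathscr A)\le r_\varepsilon(\mathscr A)$ for all $\varepsilon>0$.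
   Context: All measures are assumed not identically zero. $\mathscr G_{p,k}$ is the set of functions $\sum_{i=1}^l a_i\mathbf 1_{A_i}\in L^p$ with $l\le k$, $\{A_i\}$ a measurable partition of $\Omega$, $a_i\in\mathbb R$. $N_{p,\varepsilon}(\mathscr A)=\inf\{k\ge1:\ \forall f\in\mathscr A\ \exists h\in\mathscr G_{p,k},\ \|f-h\|_p\le\varepsilon\}$ ($\inf\emptyset=\infty$); $\mathscr A$ is uniformly approximable if this is finite for all $\varepsilon>0$. $p$-variation: for $f\in L^p$ and measurable $A$ with $\mu(A)<\infty$, $\mathrm{var}_p(f,A)^p=\frac1{\mu(A)}\int_{A\times A}|f(x)-f(y)|^p\,d\mu(x)d\mu(y)$ if $\mu(A)>0$ and $0$ otherwise; for a finite collection $\mathcal P=(A_i)$ of disjoint measurable sets of finite measure, $\mathrm{var}_p(f,\mathcal P)=(\sum_i\mathrm{var}_p(f,A_i)^p)^{1/p}$; $\mathrm{Var}_{p,k}(f,A)=\inf\{\mathrm{var}_p(f,\mathcal P):\ \mathcal P$ a measurable partition of $A$ with at most $k$ sets$\}$; $\mathrm{Var}_{p,k}(f)=\sup\{\mathrm{Var}_{p,k}(f,A):\ A\in\mathcal F,\ \mu(A)<\infty\}$. *)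

theory Defs
  imports "HOL-Analysis.Analysis" "HOL-Library.Extended_Nat"
begin

text \<open>Functions f : Omega -> R in L^p (representatives; all notions below are
  invariant under a.e. equality).\<close>
definition in_Lp :: "'a measure \<Rightarrow> real \<Rightarrow> ('a \<Rightarrow> real) \<Rightarrow> bool" where
  "in_Lp M p f \<longleftrightarrow> f \<in> borel_measurable M \<and> integrable M (\<lambda>x. \<bar>f x\<bar> powr p)"

definition Lp_norm :: "'a measure \<Rightarrow> real \<Rightarrow> ('a \<Rightarrow> real) \<Rightarrow> real" where
  "Lp_norm M p f = (LINT x|M. \<bar>f x\<bar> powr p) powr (1 / p)"

definition step_fun_set :: "'a measure \<Rightarrow> real \<Rightarrow> nat \<Rightarrow> ('a \<Rightarrow> real) set" where
  "step_fun_set M p k = {h. in_Lp M p h \<and>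
     (\<exists>l A a. l \<le> k \<and> (\<forall>i<l. A i \<in> sets M) \<and> disjoint_family_on A {..<l} \<and>
        (\<Union>i<l. A i) = space M \<and> h = (\<lambda>x. \<Sum>i<l. a i * indicator (A i) x))}"

text \<open>N_{p,eps}(A), with inf of the empty set = infinity.\<close>
definition N_approx :: "'a measure \<Rightarrow> real \<Rightarrow> real \<Rightarrow> ('a \<Rightarrow> real) set \<Rightarrow> enat" where
  "N_approx M p \<epsilon> \<A> = Inf {enat k | k. k \<ge> 1 \<and>
     (\<forall>f\<in>\<A>. \<exists>h\<in>step_fun_set M p k. Lp_norm M p (\<lambda>x. f x - h x) \<le> \<epsilon>)}"

definition unif_approx :: "'a measure \<Rightarrow> real \<Rightarrow> ('a \<Rightarrow> real) set \<Rightarrow> bool" where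
  "unif_approx M p \<A> \<longleftrightarrow> (\<forall>\<epsilon>>0. N_approx M p \<epsilon> \<A> \<noteq> \<infinity>)"

text \<open>var_p(f,A) (for A of finite measure): the double integral is taken as an
  iterated integral of a nonnegative function.\<close>
definition var_p :: "'a measure \<Rightarrow> real \<Rightarrow> ('a \<Rightarrow> real) \<Rightarrow> 'a set \<Rightarrow> real" where
  "var_p M p f A = (if 0 < measure M A then
     ((1 / measure M A) *
       enn2real (\<integral>\<^sup>+ x\<in>A. (\<integral>\<^sup>+ y\<in>A. ennreal (\<bar>f x - f y\<bar> powr p) \<partial>M) \<partial>M)) powr (1 / p)
     else 0)"

definition var_coll :: "'a measure \<Rightarrow> real \<Rightarrow> ('a \<Rightarrow> real) \<Rightarrow> nat \<Rightarrow> (nat \<Rightarrow> 'a set) \<Rightarrow> real" where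
  "var_coll M p f l P = (\<Sum>i<l. var_p M p f (P i) powr p) powr (1 / p)"

definition Var_k_on :: "'a measure \<Rightarrow> real \<Rightarrow> nat \<Rightarrow> ('a \<Rightarrow> real) \<Rightarrow> 'a set \<Rightarrow> ennreal" where
  "Var_k_on M p k f A = (INF (l, P) \<in> {(l, P). l \<le> k \<and> (\<forall>i<l. P i \<in> sets M) \<and>
       disjoint_family_on P {..<l} \<and> (\<Union>i<l. P i) = A}. ennreal (var_coll M p f l P))"

definition Var_k :: "'a measure \<Rightarrow> real \<Rightarrow> nat \<Rightarrow> ('a \<Rightarrow> real) \<Rightarrow> ennreal" where
  "Var_k M p k f = (SUP A \<in> {A \<in> sets M. emeasure M A < \<infinity>}. Var_k_on M p k f A)"

definition r_eps :: "'a measure \<Rightarrow> real \<Rightarrow> ('a \<Rightarrow> real) set \<Rightarrow> real \<Rightarrow> nat" where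
  "r_eps M p \<A> \<epsilon> = (LEAST k. k \<ge> 1 \<and> (SUP f\<in>\<A>. Var_k M p k f) \<le> ennreal \<epsilon>)"

definition m_eps :: "'a measure \<Rightarrow> real \<Rightarrow> ('a \<Rightarrow> real) set \<Rightarrow> real \<Rightarrow> nat" where
  "m_eps M p \<A> \<epsilon> = (LEAST k. k \<ge> 1 \<and> (SUP f\<in>\<A>. Var_k_on M p k f (space M)) \<le> ennreal \<epsilon>)"

end

theory Submission
  imports Defs
begin

text \<open>
  For a step function h with values a_i on the cells B_i, convexity of t \<mapsto> t^p gives
  var_p(f, A \<inter> B_i)^p \<le> 2^p \<integral>_{A \<inter> B_i} |f - a_i|^p, hence Var_{p,k}(f) \<le> 2 \<parallel>f - h\<parallel>_p.
  Conversely, the double integral defining var_p(f, Q)^p is an average over x of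
  \<integral>_Q |f - f(x)|^p, so some value c = f(x) has \<integral>_Q |f - c|^p \<le> var_p(f, Q)^p.  A partition
  with small variation therefore yields k levels such that rounding f to the nearest level has
  small L^p error; in infinite measure one extra level 0 serves the set where |f| is small, the
  rest having finite measure.  Since Var_{p,k} is an infimum, this works with error \<epsilon> + 1/m only;
  a limit of the levels (compactness in the extended reals and Fatou's lemma) gives error \<epsilon>.
  The comparison of N_{p,\<epsilon>} with r_\<epsilon> and m_\<epsilon> is then pure bookkeeping with these two
  estimates and the monotonicity of Var_{p,k} in k.
\<close>

lemma powr_half_sum_le:
  fixes a b p :: real
  assumes p: "1 \<le> p" and a: "0 \<le> a" and b: "0 \<le> b"
  shows "((a + b) / 2) powr p \<le> (a powr p + b powr p) / 2"
proof (cases "a = 0 \<or> b = 0")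
  case True
  have "(c / 2) powr p \<le> c powr p / 2" if "0 \<le> c" for c :: real
  proof -
    have "2 powr 1 \<le> 2 powr p" using p by (intro powr_mono) auto
    then have "c powr p * 2 \<le> c powr p * 2 powr p" by (intro mult_left_mono) auto
    then show ?thesis using that by (simp add: powr_divide divide_le_eq)
  qed
  then show ?thesis using True a b p by auto
next
  case False
  then show ?thesis
    using a b convex_onD[OF powr_convex[OF p], of "1/2" a b] by (simp add: add_divide_distrib)
qed

lemma abs_diff_powr_le:
  fixes u v p :: real
  assumes p: "1 \<le> p"
  shows "\<bar>u - v\<bar> powr p \<le> 2 powr (p - 1) * (\<bar>u\<bar> powr p + \<bar>v\<bar> powr p)"
proof -
  have "\<bar>u - v\<bar> powr p \<le> (2 * ((\<bar>u\<bar> + \<bar>v\<bar>) / 2)) powr p"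
    using p abs_triangle_ineq4[of u v] by (intro powr_mono2) auto
  also have "\<dots> = 2 powr p * ((\<bar>u\<bar> + \<bar>v\<bar>) / 2) powr p"
    by (subst powr_mult) auto
  also have "\<dots> \<le> 2 powr p * ((\<bar>u\<bar> powr p + \<bar>v\<bar> powr p) / 2)"
    using powr_half_sum_le[OF p, of "\<bar>u\<bar>" "\<bar>v\<bar>"] by (intro mult_left_mono) auto
  also have "\<dots> = 2 powr (p - 1) * (\<bar>u\<bar> powr p + \<bar>v\<bar> powr p)"
    by (simp add: powr_diff)
  finally show ?thesis .
qed

lemma powr_inverse_powr: "0 \<le> (x::real) \<Longrightarrow> 0 < p \<Longrightarrow> (x powr (1 / p)) powr p = x"
  by (simp add: powr_powr)

lemma powr_powr_inverse: "0 \<le> (x::real) \<Longrightarrow> 0 < p \<Longrightarrow> (x powr p) powr (1 / p) = x"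
  by (simp add: powr_powr)

lemma in_Lp_borel_measurable: "in_Lp M p f \<Longrightarrow> f \<in> borel_measurable M"
  by (simp add: in_Lp_def)

lemma in_Lp_nn_integral_finite: "in_Lp M p f \<Longrightarrow> (\<integral>\<^sup>+x. ennreal (\<bar>f x\<bar> powr p) \<partial>M) < \<infinity>"
  unfolding in_Lp_def using integrableD(2)[of M "\<lambda>x. \<bar>f x\<bar> powr p"] by (simp add: less_top)

section \<open>Variation on a set\<close>

lemma var_p_powr:
  assumes "0 < p"
  shows "var_p M p f Q powr p = (if 0 < measure M Q then (1 / measure M Q) *
     enn2real (\<integral>\<^sup>+ x\<in>Q. (\<integral>\<^sup>+ y\<in>Q. ennreal (\<bar>f x - f y\<bar> powr p) \<partial>M) \<partial>M) else 0)"
  using assms by (simp add: var_p_def powr_inverse_powr)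

lemma var_coll_nonneg: "0 \<le> var_coll M p f l P"
  by (simp add: var_coll_def)

lemma var_coll_powr: "0 < p \<Longrightarrow> var_coll M p f l P powr p = (\<Sum>i<l. var_p M p f (P i) powr p)"
  unfolding var_coll_def by (intro powr_inverse_powr sum_nonneg) auto

lemma nn_integral_double_abs_diff_powr_le:
  fixes f :: "'a \<Rightarrow> real"
  assumes p: "1 \<le> p" and [measurable]: "f \<in> borel_measurable M" "Q \<in> sets M"
  shows "(\<integral>\<^sup>+ x\<in>Q. (\<integral>\<^sup>+ y\<in>Q. ennreal (\<bar>f x - f y\<bar> powr p) \<partial>M) \<partial>M)
     \<le> ennreal (2 powr p) * emeasure M Q * (\<integral>\<^sup>+x\<in>Q. ennreal (\<bar>f x - c\<bar> powr p) \<partial>M)"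
proof -
  define G where "G x = ennreal (\<bar>f x - c\<bar> powr p)" for x
  define K where "K = ennreal (2 powr (p - 1))"
  define I where "I = (\<integral>\<^sup>+x\<in>Q. G x \<partial>M)"
  have [measurable]: "G \<in> borel_measurable M" unfolding G_def by measurable
  have pointwise: "ennreal (\<bar>f x - f y\<bar> powr p) \<le> K * (G x + G y)" for x y
  proof -
    have "\<bar>f x - f y\<bar> powr p \<le> 2 powr (p - 1) * (\<bar>f x - c\<bar> powr p + \<bar>f y - c\<bar> powr p)"
      using abs_diff_powr_le[OF p, of "f x - c" "f y - c"] by simp
    then have "ennreal (\<bar>f x - f y\<bar> powr p)
        \<le> ennreal (2 powr (p - 1) * (\<bar>f x - c\<bar> powr p + \<bar>f y - c\<bar> powr p))"
      by (rule ennreal_leI)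
    then show ?thesis unfolding K_def G_def by (simp add: ennreal_mult)
  qed
  have inner: "(\<integral>\<^sup>+ y\<in>Q. K * (G x + G y) \<partial>M) = K * G x * emeasure M Q + K * I" for x
  proof -
    have "(\<integral>\<^sup>+ y\<in>Q. K * (G x + G y) \<partial>M)
        = (\<integral>\<^sup>+ y. (K * G x) * indicator Q y + K * (G y * indicator Q y) \<partial>M)"
      by (intro nn_integral_cong) (simp add: algebra_simps)
    also have "\<dots> = K * G x * emeasure M Q + K * I"
      unfolding I_def by (subst nn_integral_add) (auto simp: nn_integral_cmult)
    finally show ?thesis .
  qed
  have "(\<integral>\<^sup>+ x\<in>Q. (\<integral>\<^sup>+ y\<in>Q. ennreal (\<bar>f x - f y\<bar> powr p) \<partial>M) \<partial>M)
      \<le> (\<integral>\<^sup>+ x\<in>Q. (\<integral>\<^sup>+ y\<in>Q. K * (G x + G y) \<partial>M) \<partial>M)"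
    by (intro nn_integral_mono mult_right_mono pointwise) auto
  also have "\<dots> = (\<integral>\<^sup>+ x. (K * emeasure M Q) * (G x * indicator Q x) + (K * I) * indicator Q x \<partial>M)"
    unfolding inner by (intro nn_integral_cong) (simp add: algebra_simps)
  also have "\<dots> = (K * emeasure M Q) * I + (K * I) * emeasure M Q"
    by (subst nn_integral_add) (auto simp: nn_integral_cmult nn_integral_cmult_indicator I_def)
  also have "\<dots> = (K * 2) * emeasure M Q * I"
    by (simp add: algebra_simps mult_2_right)
  also have "K * 2 = ennreal (2 powr p)"
  proof -
    have "K * 2 = ennreal (2 powr (p - 1) * 2)" unfolding K_def by (simp add: ennreal_mult)
    also have "2 powr (p - 1) * 2 = 2 powr p" by (simp add: powr_diff)
    finally show ?thesis .
  qed
  finally show ?thesis unfolding I_def G_def .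
qed

lemma var_p_powr_le_nn_integral:
  assumes p: "1 \<le> p" and [measurable]: "f \<in> borel_measurable M" "Q \<in> sets M"
    and Q_fin: "emeasure M Q < \<infinity>"
  shows "ennreal (var_p M p f Q powr p) \<le> ennreal (2 powr p) * (\<integral>\<^sup>+x\<in>Q. ennreal (\<bar>f x - c\<bar> powr p) \<partial>M)"
proof (cases "0 < measure M Q")
  case True
  define V where "V = (\<integral>\<^sup>+ x\<in>Q. (\<integral>\<^sup>+ y\<in>Q. ennreal (\<bar>f x - f y\<bar> powr p) \<partial>M) \<partial>M)"
  have Q_eq: "emeasure M Q = ennreal (measure M Q)"
    using Q_fin by (simp add: emeasure_eq_ennreal_measure)
  have "ennreal (var_p M p f Q powr p) = ennreal (enn2real V) / emeasure M Q"
    using p True Q_eq by (simp add: var_p_powr V_def divide_ennreal)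
  also have "\<dots> \<le> V / emeasure M Q"
    by (intro divide_right_mono_ennreal) (cases V, auto)
  also have "\<dots> \<le> (ennreal (2 powr p) * (\<integral>\<^sup>+x\<in>Q. ennreal (\<bar>f x - c\<bar> powr p) \<partial>M) * emeasure M Q) / emeasure M Q"
    using nn_integral_double_abs_diff_powr_le[OF p assms(2,3), of c] unfolding V_def
    by (intro divide_right_mono_ennreal) (simp add: algebra_simps)
  also have "\<dots> = ennreal (2 powr p) * (\<integral>\<^sup>+x\<in>Q. ennreal (\<bar>f x - c\<bar> powr p) \<partial>M)"
    using True Q_eq by (intro ennreal_mult_divide_eq) auto
  finally show ?thesis .
qed (use p in \<open>simp add: var_p_def\<close>)

lemma borel_measurable_nn_integral_restricted:
  assumes [measurable]: "Q \<in> sets M" and Q_fin: "emeasure M Q < \<infinity>"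
    and [measurable]: "case_prod F \<in> borel_measurable (M \<Otimes>\<^sub>M M)"
  shows "(\<lambda>x. \<integral>\<^sup>+y\<in>Q. F x y \<partial>M) \<in> borel_measurable M"
proof -
  \<comment> \<open>No sigma-finiteness of M is needed: integrate against the finite measure M restricted to Q.\<close>
  define D where "D = density M (indicator Q)"
  have "emeasure D (space D) = (\<integral>\<^sup>+x. indicator Q x \<partial>M)"
    unfolding D_def by (subst emeasure_density) (auto intro!: nn_integral_cong)
  also have "\<dots> = emeasure M Q" by simp
  finally have "emeasure D (space D) = emeasure M Q" .
  then interpret D: finite_measure D
    using Q_fin by (intro finite_measureI) simp
  have "case_prod F \<in> borel_measurable (M \<Otimes>\<^sub>M D)"
    by (subst measurable_cong_sets[OF sets_pair_measure_cong[OF refl]]) (auto simp: D_def)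
  then have "(\<lambda>x. \<integral>\<^sup>+y. F x y \<partial>D) \<in> borel_measurable M"
    by (rule D.borel_measurable_nn_integral)
  moreover have "(\<integral>\<^sup>+y. F x y \<partial>D) = (\<integral>\<^sup>+y\<in>Q. F x y \<partial>M)" if "x \<in> space M" for x
  proof -
    have [measurable]: "(\<lambda>y. F x y) \<in> borel_measurable M"
      using measurable_Pair2[OF assms(3) that] by simp
    show ?thesis unfolding D_def by (subst nn_integral_density) (auto simp: mult.commute)
  qed
  ultimately show ?thesis by (subst measurable_cong) auto
qed

lemma nn_integral_set_exists_le_average:
  assumes [measurable]: "g \<in> borel_measurable M" "Q \<in> sets M"
    and Q_pos: "emeasure M Q \<noteq> 0" and Q_fin: "emeasure M Q < \<infinity>"
    and V_fin: "(\<integral>\<^sup>+x\<in>Q. g x \<partial>M) < \<infinity>"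
  shows "\<exists>x\<in>Q. g x \<le> (\<integral>\<^sup>+x\<in>Q. g x \<partial>M) / emeasure M Q"
proof (rule ccontr)
  define t where "t = (\<integral>\<^sup>+x\<in>Q. g x \<partial>M) / emeasure M Q"
  have t_mult: "t * emeasure M Q = (\<integral>\<^sup>+x\<in>Q. g x \<partial>M)"
    unfolding t_def using Q_pos Q_fin by (simp add: ennreal_divide_times ennreal_divide_self)
  assume "\<not> (\<exists>x\<in>Q. g x \<le> (\<integral>\<^sup>+x\<in>Q. g x \<partial>M) / emeasure M Q)"
  then have above: "\<And>x. x \<in> Q \<Longrightarrow> t < g x" by (auto simp: not_le t_def)
  have "(\<integral>\<^sup>+x. t * indicator Q x \<partial>M) < (\<integral>\<^sup>+x. g x * indicator Q x \<partial>M)"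
  proof (rule nn_integral_less)
    show "(\<integral>\<^sup>+x. t * indicator Q x \<partial>M) \<noteq> \<infinity>"
      using t_mult V_fin by (simp add: nn_integral_cmult_indicator)
    show "AE x in M. t * indicator Q x \<le> g x * indicator Q x"
      using above by (intro AE_I2) (auto simp: indicator_def less_imp_le)
    show "\<not> (AE x in M. g x * indicator Q x \<le> t * indicator Q x)"
    proof
      assume "AE x in M. g x * indicator Q x \<le> t * indicator Q x"
      then have "AE x in M. x \<notin> Q"
        by eventually_elim (use above in \<open>force simp: indicator_def\<close>)
      then show False using Q_pos AE_iff_null_sets[of Q M] by auto
    qed
  qed auto
  then show False using t_mult by (simp add: nn_integral_cmult_indicator)
qed

lemma exists_const_nn_integral_le_var_p:
  assumes p: "1 \<le> p" and f: "in_Lp M p f" and [measurable]: "Q \<in> sets M"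
    and Q_fin: "emeasure M Q < \<infinity>"
  shows "\<exists>c. (\<integral>\<^sup>+x\<in>Q. ennreal (\<bar>f x - c\<bar> powr p) \<partial>M) \<le> ennreal (var_p M p f Q powr p)"
proof (cases "0 < measure M Q")
  case False
  then have "Q \<in> null_sets M"
    using Q_fin measure_nonneg[of M Q] by (auto simp: emeasure_eq_ennreal_measure)
  then show ?thesis by (simp add: nn_integral_null_set)
next
  case True
  have [measurable]: "f \<in> borel_measurable M" using f by (rule in_Lp_borel_measurable)
  have Q_eq: "emeasure M Q = ennreal (measure M Q)"
    using Q_fin by (simp add: emeasure_eq_ennreal_measure)
  define g where "g x = (\<integral>\<^sup>+y\<in>Q. ennreal (\<bar>f x - f y\<bar> powr p) \<partial>M)" for x
  define V where "V = (\<integral>\<^sup>+x\<in>Q. g x \<partial>M)"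
  have [measurable]: "g \<in> borel_measurable M"
    unfolding g_def by (rule borel_measurable_nn_integral_restricted[OF _ Q_fin]) measurable
  have "V \<le> ennreal (2 powr p) * emeasure M Q * (\<integral>\<^sup>+x\<in>Q. ennreal (\<bar>f x - 0\<bar> powr p) \<partial>M)"
    unfolding V_def g_def by (rule nn_integral_double_abs_diff_powr_le[OF p]) auto
  also have "\<dots> \<le> ennreal (2 powr p) * emeasure M Q * (\<integral>\<^sup>+x. ennreal (\<bar>f x\<bar> powr p) \<partial>M)"
    by (intro mult_left_mono nn_integral_mono) (auto simp: indicator_def)
  also have "\<dots> < \<infinity>"
    using in_Lp_nn_integral_finite[OF f] Q_fin by (simp add: ennreal_mult_less_top less_top)
  finally have V_fin: "V < \<infinity>" .
  obtain x where "x \<in> Q" and x: "g x \<le> V / emeasure M Q"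
    using nn_integral_set_exists_le_average[of g M Q] True Q_eq V_fin unfolding V_def by auto
  have "ennreal (var_p M p f Q powr p) = ennreal (enn2real V) / ennreal (measure M Q)"
    using p True by (simp add: var_p_powr V_def g_def divide_ennreal)
  also have "\<dots> = V / emeasure M Q"
    using V_fin Q_eq by simp
  finally have "V / emeasure M Q = ennreal (var_p M p f Q powr p)" ..
  then show ?thesis
    using x unfolding g_def by (intro exI[of _ "f x"]) (simp add: abs_minus_commute)
qed

section \<open>Rounding to finitely many levels\<close>

definition quant_err :: "'a measure \<Rightarrow> real \<Rightarrow> ('a \<Rightarrow> real) \<Rightarrow> nat \<Rightarrow> (nat \<Rightarrow> real) \<Rightarrow> ennreal" where
  "quant_err M p f n a = (\<integral>\<^sup>+x. (INF i\<in>{..<n}. ennreal (\<bar>f x - a i\<bar> powr p)) \<partial>M)"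

lemma borel_measurable_INF_abs_diff_powr[measurable]:
  fixes f :: "'a \<Rightarrow> real" and n :: nat
  assumes [measurable]: "f \<in> borel_measurable M"
  shows "(\<lambda>x. INF i\<in>{..<n}. ennreal (\<bar>f x - a i\<bar> powr p)) \<in> borel_measurable M"
  by (rule borel_measurable_INF) (auto intro: countable_finite)

lemma nearest_level_partition:
  fixes f :: "'a \<Rightarrow> real" and n :: nat
  assumes [measurable]: "f \<in> borel_measurable M" and n: "0 < n"
  obtains A where "\<forall>i<n. A i \<in> sets M" "disjoint_family_on A {..<n}" "(\<Union>i<n. A i) = space M"
    "\<And>i j x. i < n \<Longrightarrow> j < n \<Longrightarrow> x \<in> A i \<Longrightarrow> \<bar>f x - a i\<bar> \<le> \<bar>f x - a j\<bar>"
proof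
  define d where "d x i = \<bar>f x - a i\<bar>" for x i
  \<comment> \<open>Ties are broken towards the smallest index, which makes the cells disjoint.\<close>
  define A where "A i = {x\<in>space M. (\<forall>j\<in>{..<n}. d x i \<le> d x j) \<and> (\<forall>j\<in>{..<i}. d x i < d x j)}" for i
  show "\<forall>i<n. A i \<in> sets M" unfolding A_def d_def by (intro allI impI) measurable
  show "disjoint_family_on A {..<n}"
    unfolding disjoint_family_on_def A_def by (auto simp: linorder_neq_iff) (meson lessThan_iff less_trans not_le)+
  show "\<bar>f x - a i\<bar> \<le> \<bar>f x - a j\<bar>" if "j < n" "x \<in> A i" for i j x
    using that unfolding A_def d_def by auto
  show "(\<Union>i<n. A i) = space M"
  proof (intro equalityI subsetI)
    fix x assume x: "x \<in> space M"
    define S where "S = {i. i < n \<and> (\<forall>j<n. d x i \<le> d x j)}"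
    have "Min (d x ` {..<n}) \<in> d x ` {..<n}"
      using n by (intro Min_in) auto
    then obtain i where "i < n" "d x i = Min (d x ` {..<n})" by auto
    then have "i \<in> S" unfolding S_def by auto
    define i0 where "i0 = (LEAST i. i \<in> S)"
    have i0: "i0 \<in> S" unfolding i0_def using \<open>i \<in> S\<close> by (rule LeastI)
    have "d x i0 < d x j" if "j < i0" for j
    proof -
      have "j < n" using that i0 unfolding S_def by auto
      moreover have "j \<notin> S" using that unfolding i0_def by (rule not_less_Least)
      ultimately obtain j' where "j' < n" "d x j' < d x j" unfolding S_def by (auto simp: not_le)
      then show ?thesis using i0 unfolding S_def by force
    qed
    then show "x \<in> (\<Union>i<n. A i)" using i0 x unfolding S_def A_def by auto
  qed (auto simp: A_def)
qed

lemma Lp_norm_le_iff: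
  assumes p: "0 < p" and e: "0 \<le> \<epsilon>" and g: "integrable M (\<lambda>x. \<bar>g x\<bar> powr p)"
  shows "Lp_norm M p g \<le> \<epsilon> \<longleftrightarrow> (\<integral>\<^sup>+x. ennreal (\<bar>g x\<bar> powr p) \<partial>M) \<le> ennreal (\<epsilon> powr p)"
proof -
  define I where "I = (LINT x|M. \<bar>g x\<bar> powr p)"
  have I0: "0 \<le> I" by (simp add: I_def)
  have "(\<integral>\<^sup>+x. ennreal (\<bar>g x\<bar> powr p) \<partial>M) = ennreal I"
    unfolding I_def by (rule nn_integral_eq_integral[OF g]) simp
  moreover have "I powr (1 / p) \<le> \<epsilon> \<longleftrightarrow> I \<le> \<epsilon> powr p"
  proof
    assume "I powr (1 / p) \<le> \<epsilon>"
    then have "(I powr (1 / p)) powr p \<le> \<epsilon> powr p" using p by (intro powr_mono2) auto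
    then show "I \<le> \<epsilon> powr p" using I0 p by (simp add: powr_inverse_powr)
  next
    assume "I \<le> \<epsilon> powr p"
    then have "I powr (1 / p) \<le> (\<epsilon> powr p) powr (1 / p)" using I0 p by (intro powr_mono2) auto
    then show "I powr (1 / p) \<le> \<epsilon>" using e p by (simp add: powr_powr_inverse)
  qed
  ultimately show ?thesis unfolding Lp_norm_def I_def[symmetric] by simp
qed

lemma integrable_abs_diff_powr:
  assumes p: "1 \<le> p" and f: "in_Lp M p f" and g: "in_Lp M p g"
  shows "integrable M (\<lambda>x. \<bar>f x - g x\<bar> powr p)"
proof (rule Bochner_Integration.integrable_bound)
  show "integrable M (\<lambda>x. 2 powr (p - 1) * (\<bar>f x\<bar> powr p + \<bar>g x\<bar> powr p))"
    using f g unfolding in_Lp_def by auto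
  show "AE x in M. norm (\<bar>f x - g x\<bar> powr p) \<le> norm (2 powr (p - 1) * (\<bar>f x\<bar> powr p + \<bar>g x\<bar> powr p))"
    using abs_diff_powr_le[OF p] by (intro AE_I2) simp
  have [measurable]: "f \<in> borel_measurable M" "g \<in> borel_measurable M"
    using f g by (auto intro: in_Lp_borel_measurable)
  show "(\<lambda>x. \<bar>f x - g x\<bar> powr p) \<in> borel_measurable M" by measurable
qed

lemma in_Lp_of_bounded:
  assumes "emeasure M (space M) < \<infinity>" and "0 \<le> p" and [measurable]: "h \<in> borel_measurable M"
    and bound: "\<And>x. x \<in> space M \<Longrightarrow> \<bar>h x\<bar> \<le> B"
  shows "in_Lp M p h"
  unfolding in_Lp_def
proof
  interpret finite_measure M using assms(1) by (intro finite_measureI) simp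
  show "integrable M (\<lambda>x. \<bar>h x\<bar> powr p)"
    by (rule integrable_const_bound[where B="B powr p"])
      (use bound \<open>0 \<le> p\<close> in \<open>auto intro!: AE_I2 powr_mono2\<close>)
qed simp

lemma in_Lp_of_abs_le:
  assumes f: "in_Lp M p f" and "0 \<le> p" "0 \<le> c" and [measurable]: "h \<in> borel_measurable M"
    and bound: "\<And>x. x \<in> space M \<Longrightarrow> \<bar>h x\<bar> \<le> c * \<bar>f x\<bar>"
  shows "in_Lp M p h"
  unfolding in_Lp_def
proof
  show "integrable M (\<lambda>x. \<bar>h x\<bar> powr p)"
  proof (rule Bochner_Integration.integrable_bound)
    show "integrable M (\<lambda>x. c powr p * \<bar>f x\<bar> powr p)"
      using f unfolding in_Lp_def by simp
    show "AE x in M. norm (\<bar>h x\<bar> powr p) \<le> norm (c powr p * \<bar>f x\<bar> powr p)"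
    proof (rule AE_I2)
      fix x assume "x \<in> space M"
      then have "\<bar>h x\<bar> powr p \<le> (c * \<bar>f x\<bar>) powr p"
        using bound \<open>0 \<le> p\<close> by (intro powr_mono2) auto
      then show "norm (\<bar>h x\<bar> powr p) \<le> norm (c powr p * \<bar>f x\<bar> powr p)"
        using \<open>0 \<le> c\<close> by (simp add: powr_mult)
    qed
  qed measurable
qed simp

lemma nn_integral_nearest_level_eq_quant_err:
  assumes p: "0 \<le> p"
    and near: "\<And>x. x \<in> space M \<Longrightarrow> \<exists>i<n. h x = b i \<and> (\<forall>j<n. \<bar>f x - h x\<bar> \<le> \<bar>f x - b j\<bar>)"
  shows "(\<integral>\<^sup>+x. ennreal (\<bar>f x - h x\<bar> powr p) \<partial>M) = quant_err M p f n b"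
  unfolding quant_err_def
proof (intro nn_integral_cong antisym)
  fix x assume "x \<in> space M"
  then obtain i where i: "i < n" "h x = b i" and le: "\<forall>j<n. \<bar>f x - h x\<bar> \<le> \<bar>f x - b j\<bar>"
    using near by blast
  show "ennreal (\<bar>f x - h x\<bar> powr p) \<le> (INF i\<in>{..<n}. ennreal (\<bar>f x - b i\<bar> powr p))"
    using le p by (intro INF_greatest ennreal_leI powr_mono2) auto
  show "(INF i\<in>{..<n}. ennreal (\<bar>f x - b i\<bar> powr p)) \<le> ennreal (\<bar>f x - h x\<bar> powr p)"
    using i by (intro INF_lower2[of i]) auto
qed

lemma in_Lp_nearest_level:
  fixes n :: nat
  assumes p: "0 \<le> p" and f: "in_Lp M p f" and [measurable]: "h \<in> borel_measurable M"
    and near: "\<And>x. x \<in> space M \<Longrightarrow> \<exists>i<n. h x = b i \<and> (\<forall>j<n. \<bar>f x - h x\<bar> \<le> \<bar>f x - b j\<bar>)"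
    and fin_or_zero: "emeasure M (space M) < \<infinity> \<or> (\<exists>i<n. b i = 0)"
  shows "in_Lp M p h"
  using fin_or_zero
proof
  assume "emeasure M (space M) < \<infinity>"
  moreover have "\<bar>h x\<bar> \<le> (\<Sum>i<n. \<bar>b i\<bar>)" if "x \<in> space M" for x
  proof -
    obtain i where "i < n" "h x = b i" using near \<open>x \<in> space M\<close> by blast
    then show ?thesis using member_le_sum[of i "{..<n}" "\<lambda>i. \<bar>b i\<bar>"] by simp
  qed
  ultimately show ?thesis using p by (intro in_Lp_of_bounded) auto
next
  \<comment> \<open>A zero level keeps h within 2|f| pointwise.\<close>
  assume "\<exists>i<n. b i = 0"
  then have "\<bar>h x\<bar> \<le> 2 * \<bar>f x\<bar>" if "x \<in> space M" for x
    using near[OF that] by fastforce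
  then show ?thesis using p by (intro in_Lp_of_abs_le[OF f, where c=2]) auto
qed

lemma step_fun_of_quant_err:
  assumes p: "1 \<le> p" and f: "in_Lp M p f" and nz: "emeasure M (space M) \<noteq> 0" and "n \<le> k"
    and q: "quant_err M p f n b \<le> ennreal (\<epsilon> powr p)" and e: "0 \<le> \<epsilon>"
    and fin_or_zero: "emeasure M (space M) < \<infinity> \<or> (\<exists>i<n. b i = 0)"
  shows "\<exists>h\<in>step_fun_set M p k. Lp_norm M p (\<lambda>x. f x - h x) \<le> \<epsilon>"
proof -
  have [measurable]: "f \<in> borel_measurable M" using f by (rule in_Lp_borel_measurable)
  have "n \<noteq> 0"
  proof
    assume "n = 0"
    then have "quant_err M p f n b = \<infinity>" using nz by (simp add: quant_err_def ennreal_top_mult)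
    then show False using q by (simp add: top_unique)
  qed
  then obtain A where A: "\<forall>i<n. A i \<in> sets M" "disjoint_family_on A {..<n}" "(\<Union>i<n. A i) = space M"
    and nearest: "\<And>i j x. i < n \<Longrightarrow> j < n \<Longrightarrow> x \<in> A i \<Longrightarrow> \<bar>f x - b i\<bar> \<le> \<bar>f x - b j\<bar>"
    using nearest_level_partition[of f M n b] by auto
  define h where "h x = (\<Sum>i<n. b i * indicator (A i) x)" for x
  have [measurable]: "\<And>i. i \<in> {..<n} \<Longrightarrow> A i \<in> sets M" using A(1) by auto
  have [measurable]: "h \<in> borel_measurable M"
    unfolding h_def by measurable
  have near: "\<exists>i<n. h x = b i \<and> (\<forall>j<n. \<bar>f x - h x\<bar> \<le> \<bar>f x - b j\<bar>)" if x: "x \<in> space M" for x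
  proof -
    obtain i where i: "i < n" "x \<in> A i" using A(3) x by auto
    then have "h x = b i"
      unfolding h_def using sum_indicator_disjoint_family[OF A(2), of x i b] by simp
    then show ?thesis using i nearest by auto
  qed
  have h_Lp: "in_Lp M p h"
    using p by (intro in_Lp_nearest_level[OF _ f _ near fin_or_zero]) auto
  have "h \<in> step_fun_set M p k"
    unfolding step_fun_set_def using h_Lp A \<open>n \<le> k\<close> unfolding h_def by blast
  moreover have "(\<integral>\<^sup>+x. ennreal (\<bar>f x - h x\<bar> powr p) \<partial>M) = quant_err M p f n b"
    using p by (intro nn_integral_nearest_level_eq_quant_err[OF _ near]) auto
  ultimately show ?thesis
    using q Lp_norm_le_iff[OF _ e integrable_abs_diff_powr[OF p f h_Lp]] p by auto
qed

lemma exists_levels_le_var_coll: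
  assumes p: "1 \<le> p" and f: "in_Lp M p f"
    and P: "\<forall>i<l. P i \<in> sets M" "(\<Union>i<l. P i) = A" and P_fin: "\<forall>i<l. emeasure M (P i) < \<infinity>"
  shows "\<exists>a. (\<integral>\<^sup>+x. (INF i\<in>{..<l}. ennreal (\<bar>f x - a i\<bar> powr p)) * indicator A x \<partial>M)
           \<le> ennreal (var_coll M p f l P powr p)"
proof -
  have [measurable]: "f \<in> borel_measurable M" "\<And>i. i < l \<Longrightarrow> P i \<in> sets M"
    using f P by (auto intro: in_Lp_borel_measurable)
  have "\<forall>i\<in>{..<l}. \<exists>c. (\<integral>\<^sup>+x\<in>P i. ennreal (\<bar>f x - c\<bar> powr p) \<partial>M) \<le> ennreal (var_p M p f (P i) powr p)"
    using exists_const_nn_integral_le_var_p[OF p f] P P_fin by auto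
  then obtain a where a: "\<forall>i\<in>{..<l}.
      (\<integral>\<^sup>+x\<in>P i. ennreal (\<bar>f x - a i\<bar> powr p) \<partial>M) \<le> ennreal (var_p M p f (P i) powr p)"
    by (auto dest!: bchoice)
  have "(\<integral>\<^sup>+x. (INF i\<in>{..<l}. ennreal (\<bar>f x - a i\<bar> powr p)) * indicator A x \<partial>M)
      \<le> (\<integral>\<^sup>+x. (\<Sum>i<l. ennreal (\<bar>f x - a i\<bar> powr p) * indicator (P i) x) \<partial>M)"
  proof (intro nn_integral_mono)
    fix x
    show "(INF i\<in>{..<l}. ennreal (\<bar>f x - a i\<bar> powr p)) * indicator A x
        \<le> (\<Sum>i<l. ennreal (\<bar>f x - a i\<bar> powr p) * indicator (P i) x)"
    proof (cases "x \<in> A")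
      case True
      then obtain j where j: "j < l" "x \<in> P j" using P(2) by auto
      then have "(INF i\<in>{..<l}. ennreal (\<bar>f x - a i\<bar> powr p)) * indicator A x
          \<le> ennreal (\<bar>f x - a j\<bar> powr p) * indicator (P j) x"
        using True by (simp add: INF_lower2[of j])
      also have "\<dots> \<le> (\<Sum>i<l. ennreal (\<bar>f x - a i\<bar> powr p) * indicator (P i) x)"
        using j by (intro member_le_sum) auto
      finally show ?thesis .
    qed simp
  qed
  also have "\<dots> = (\<Sum>i<l. \<integral>\<^sup>+x\<in>P i. ennreal (\<bar>f x - a i\<bar> powr p) \<partial>M)"
    by (intro nn_integral_sum) auto
  also have "\<dots> \<le> (\<Sum>i<l. ennreal (var_p M p f (P i) powr p))"
    using a by (intro sum_mono) auto
  also have "\<dots> = ennreal (var_coll M p f l P powr p)"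
    using p by (simp add: var_coll_powr sum_ennreal)
  finally show ?thesis by blast
qed

lemma exists_levels_of_Var_k_on_less:
  assumes p: "1 \<le> p" and f: "in_Lp M p f" and "A \<in> sets M" and A_fin: "emeasure M A < \<infinity>"
    and less: "Var_k_on M p k f A < ennreal t"
  shows "\<exists>a. (\<integral>\<^sup>+x. (INF i\<in>{..<k}. ennreal (\<bar>f x - a i\<bar> powr p)) * indicator A x \<partial>M)
           \<le> ennreal (t powr p)"
proof -
  obtain l P where l: "l \<le> k" and P: "\<forall>i<l. P i \<in> sets M" "(\<Union>i<l. P i) = A"
    and var: "ennreal (var_coll M p f l P) < ennreal t"
    using less unfolding Var_k_on_def INF_less_iff by (auto simp: case_prod_beta)
  have "\<forall>i<l. emeasure M (P i) < \<infinity>"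
  proof (intro allI impI)
    fix i assume "i < l"
    then have "emeasure M (P i) \<le> emeasure M A" using P by (intro emeasure_mono) auto
    then show "emeasure M (P i) < \<infinity>" using A_fin by (rule le_less_trans)
  qed
  then obtain a where a: "(\<integral>\<^sup>+x. (INF i\<in>{..<l}. ennreal (\<bar>f x - a i\<bar> powr p)) * indicator A x \<partial>M)
      \<le> ennreal (var_coll M p f l P powr p)"
    using exists_levels_le_var_coll[OF p f P] by blast
  have "(\<integral>\<^sup>+x. (INF i\<in>{..<k}. ennreal (\<bar>f x - a i\<bar> powr p)) * indicator A x \<partial>M)
      \<le> (\<integral>\<^sup>+x. (INF i\<in>{..<l}. ennreal (\<bar>f x - a i\<bar> powr p)) * indicator A x \<partial>M)"
    using l by (intro nn_integral_mono mult_right_mono INF_superset_mono) auto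
  also note a
  also have "ennreal (var_coll M p f l P powr p) \<le> ennreal (t powr p)"
    using var p var_coll_nonneg[of M p f l P]
    by (intro ennreal_leI powr_mono2) (auto simp: ennreal_less_iff)
  finally show ?thesis by blast
qed

section \<open>Compactness of the levels\<close>

lemma ereal_subseq_convergent_coords:
  fixes a :: "nat \<Rightarrow> nat \<Rightarrow> real"
  shows "\<exists>r. strict_mono r \<and> (\<forall>i<n. \<exists>l. (\<lambda>m. ereal (a (r m) i)) \<longlonglongrightarrow> l)"
proof (induction n)
  case 0
  show ?case by (intro exI[of _ id]) (auto simp: strict_mono_def)
next
  case (Suc n)
  then obtain r where r: "strict_mono r" "\<forall>i<n. \<exists>l. (\<lambda>m. ereal (a (r m) i)) \<longlonglongrightarrow> l" by blast
  obtain s where s: "strict_mono s" "monoseq (\<lambda>m. ereal (a (r (s m)) n))"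
    using seq_monosub[of "\<lambda>m. ereal (a (r m) n)"] by blast
  have "\<exists>l. (\<lambda>m. ereal (a (r (s m)) n)) \<longlonglongrightarrow> l"
    using s(2) unfolding monoseq_iff by (metis LIMSEQ_SUP LIMSEQ_INF)
  moreover have "\<exists>l. (\<lambda>m. ereal (a (r (s m)) i)) \<longlonglongrightarrow> l" if "i < n" for i
  proof -
    obtain l where "(\<lambda>m. ereal (a (r m) i)) \<longlonglongrightarrow> l" using r(2) \<open>i < n\<close> by blast
    from LIMSEQ_subseq_LIMSEQ[OF this s(1)] show ?thesis by (auto simp: o_def)
  qed
  ultimately show ?case
    using strict_mono_o[OF r(1) s(1)] by (intro exI[of _ "r \<circ> s"]) (auto simp: less_Suc_eq o_def)
qed

lemma tendsto_INF_lessThan: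
  fixes g :: "nat \<Rightarrow> nat \<Rightarrow> 'b::{complete_linorder, linorder_topology}"
  shows "(\<And>i. i < n \<Longrightarrow> (\<lambda>m. g m i) \<longlonglongrightarrow> L i) \<Longrightarrow>
    (\<lambda>m. INF i\<in>{..<n}. g m i) \<longlonglongrightarrow> (INF i\<in>{..<n}. L i)"
proof (induction n)
  case (Suc n)
  then have "(\<lambda>m. min (g m n) (INF i\<in>{..<n}. g m i)) \<longlonglongrightarrow> min (L n) (INF i\<in>{..<n}. L i)"
    by (intro tendsto_min) auto
  then show ?case by (simp add: lessThan_Suc inf_min)
qed simp

lemma tendsto_ennreal_abs_diff_powr:
  fixes s :: "nat \<Rightarrow> real"
  assumes p: "1 \<le> p" and l: "(\<lambda>m. ereal (s m)) \<longlonglongrightarrow> l"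
  shows "(\<lambda>m. ennreal (\<bar>y - s m\<bar> powr p)) \<longlonglongrightarrow>
     (if \<bar>l\<bar> \<noteq> \<infinity> then ennreal (\<bar>y - real_of_ereal l\<bar> powr p) else \<infinity>)"
proof (cases "\<bar>l\<bar> \<noteq> \<infinity>")
  case True
  then obtain c where c: "l = ereal c" by auto
  then have "s \<longlonglongrightarrow> c" using l by simp
  then have "(\<lambda>m. \<bar>y - s m\<bar> powr p) \<longlonglongrightarrow> \<bar>y - c\<bar> powr p"
    using p by (intro tendsto_powr' tendsto_intros) auto
  then show ?thesis using c by (auto intro: tendsto_ennrealI)
next
  case False
  have "filterlim (\<lambda>m. \<bar>y - s m\<bar>) at_top sequentially"
    unfolding filterlim_at_top
  proof
    fix Z :: real
    from False show "eventually (\<lambda>m. Z \<le> \<bar>y - s m\<bar>) sequentially"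
    proof (cases l)
      case PInf
      then have "eventually (\<lambda>m. ereal (Z + \<bar>y\<bar>) < ereal (s m)) sequentially"
        using l[unfolded PInf tendsto_PInfty] by blast
      then show ?thesis by eventually_elim auto
    next
      case MInf
      then have "eventually (\<lambda>m. ereal (s m) < ereal (- (Z + \<bar>y\<bar>))) sequentially"
        using l[unfolded MInf tendsto_MInfty] by blast
      then show ?thesis by eventually_elim auto
    qed auto
  qed
  moreover from this have "eventually (\<lambda>m. \<bar>y - s m\<bar> \<le> \<bar>y - s m\<bar> powr p) sequentially"
    unfolding filterlim_at_top
  proof (rule eventually_mono[OF spec[of _ 1]])
    fix m assume "1 \<le> \<bar>y - s m\<bar>"
    then show "\<bar>y - s m\<bar> \<le> \<bar>y - s m\<bar> powr p" using powr_mono[OF p, of "\<bar>y - s m\<bar>"] by simp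
  qed
  ultimately have "filterlim (\<lambda>m. \<bar>y - s m\<bar> powr p) at_top sequentially"
    by (rule filterlim_at_top_mono)
  then show ?thesis using False by (simp add: ennreal_tendsto_top_eq_at_top)
qed

lemma quant_err_le_of_ereal_limits:
  assumes p: "1 \<le> p" and [measurable]: "f \<in> borel_measurable M"
    and nz: "emeasure M (space M) \<noteq> 0"
    and lim: "\<And>i. i < n \<Longrightarrow> (\<lambda>m. ereal (a m i)) \<longlonglongrightarrow> l i"
    and le: "\<And>m. quant_err M p f n (a m) \<le> u m" and u: "u \<longlonglongrightarrow> L" and L: "L < \<infinity>"
  shows "\<exists>b. quant_err M p f n b \<le> L \<and> (\<forall>i<n. \<bar>l i\<bar> \<noteq> \<infinity> \<longrightarrow> b i = real_of_ereal (l i))"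
proof -
  \<comment> \<open>The limit of the distance from f x to level i; it is \<infinity> if the level escapes to \<plusminus>\<infinity>.\<close>
  define \<psi> where "\<psi> x i = (if \<bar>l i\<bar> \<noteq> \<infinity> then ennreal (\<bar>f x - real_of_ereal (l i)\<bar> powr p) else \<infinity>)"
    for x i
  have \<psi>_lim: "(\<lambda>m. INF i\<in>{..<n}. ennreal (\<bar>f x - a m i\<bar> powr p)) \<longlonglongrightarrow> (INF i\<in>{..<n}. \<psi> x i)" for x
    unfolding \<psi>_def by (intro tendsto_INF_lessThan tendsto_ennreal_abs_diff_powr[OF p] lim)
  have "(\<integral>\<^sup>+ x. (INF i\<in>{..<n}. \<psi> x i) \<partial>M)
      = (\<integral>\<^sup>+ x. liminf (\<lambda>m. INF i\<in>{..<n}. ennreal (\<bar>f x - a m i\<bar> powr p)) \<partial>M)"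
    by (simp only: lim_imp_Liminf[OF trivial_limit_sequentially \<psi>_lim])
  also have "\<dots> \<le> liminf (\<lambda>m. quant_err M p f n (a m))"
    unfolding quant_err_def by (rule nn_integral_liminf) measurable
  also have "\<dots> \<le> liminf u"
    using le by (intro Liminf_mono) auto
  also have "\<dots> = L"
    using u by (intro lim_imp_Liminf) auto
  finally have \<psi>_int: "(\<integral>\<^sup>+ x. (INF i\<in>{..<n}. \<psi> x i) \<partial>M) \<le> L" .
  \<comment> \<open>Not every level escapes, since otherwise the integral above would be infinite.\<close>
  obtain j0 where j0: "j0 < n" "\<bar>l j0\<bar> \<noteq> \<infinity>"
  proof (rule ccontr)
    assume "\<not> thesis"
    with that have "\<forall>j<n. \<bar>l j\<bar> = \<infinity>" by blast
    then have "\<And>x. (INF i\<in>{..<n}. \<psi> x i) = \<infinity>" unfolding \<psi>_def by (auto intro: INF_eqI)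
    then show False using \<psi>_int L nz by simp
  qed
  define b where "b i = real_of_ereal (if \<bar>l i\<bar> \<noteq> \<infinity> then l i else l j0)" for i
  have "quant_err M p f n b \<le> (\<integral>\<^sup>+ x. (INF i\<in>{..<n}. \<psi> x i) \<partial>M)"
    unfolding quant_err_def
  proof (intro nn_integral_mono INF_greatest)
    fix x i assume "i \<in> {..<n}"
    then show "(INF i\<in>{..<n}. ennreal (\<bar>f x - b i\<bar> powr p)) \<le> \<psi> x i"
      unfolding \<psi>_def b_def by (auto intro: INF_lower2[of i])
  qed
  then show ?thesis using \<psi>_int by (intro exI[of _ b]) (auto simp: b_def)
qed

lemma exists_levels_quant_err_le_limit:
  assumes p: "1 \<le> p" and [measurable]: "f \<in> borel_measurable M"
    and nz: "emeasure M (space M) \<noteq> 0"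
    and le: "\<And>m. quant_err M p f n (a m) \<le> u m" and u: "u \<longlonglongrightarrow> L" and L: "L < \<infinity>"
  shows "\<exists>b. quant_err M p f n b \<le> L \<and> (\<forall>i<n. (\<forall>m. a m i = 0) \<longrightarrow> b i = 0)"
proof -
  obtain r where r: "strict_mono r" and "\<forall>i<n. \<exists>l. (\<lambda>m. ereal (a (r m) i)) \<longlonglongrightarrow> l"
    using ereal_subseq_convergent_coords[of n a] by blast
  then obtain l where l: "\<And>i. i < n \<Longrightarrow> (\<lambda>m. ereal (a (r m) i)) \<longlonglongrightarrow> l i"
    by metis
  have "(\<lambda>m. u (r m)) \<longlonglongrightarrow> L" using LIMSEQ_subseq_LIMSEQ[OF u r] by (simp add: o_def)
  then obtain b where b: "quant_err M p f n b \<le> L"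
    and b_l: "\<forall>i<n. \<bar>l i\<bar> \<noteq> \<infinity> \<longrightarrow> b i = real_of_ereal (l i)"
    using quant_err_le_of_ereal_limits[where a="\<lambda>m. a (r m)", OF p _ nz l le _ L] by auto
  have "b i = 0" if "i < n" and "\<forall>m. a m i = 0" for i
  proof -
    have "(\<lambda>m. ereal (a (r m) i)) \<longlonglongrightarrow> 0" using that by (simp add: zero_ereal_def)
    then have "l i = 0" using l[OF \<open>i < n\<close>] LIMSEQ_unique by blast
    then show ?thesis using b_l \<open>i < n\<close> by simp
  qed
  then show ?thesis using b by blast
qed

section \<open>Variation versus approximation by step functions\<close>

lemma sum_var_p_powr_le_step_dist:
  fixes l :: nat
  assumes p: "1 \<le> p" and [measurable]: "f \<in> borel_measurable M"
    and B: "\<forall>i<l. B i \<in> sets M" "disjoint_family_on B {..<l}"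
    and [measurable]: "A \<in> sets M" and A_fin: "emeasure M A < \<infinity>"
    and h: "h = (\<lambda>x. \<Sum>i<l. a i * indicator (B i) x)"
  shows "(\<Sum>i<l. ennreal (var_p M p f (A \<inter> B i) powr p))
    \<le> ennreal (2 powr p) * (\<integral>\<^sup>+x. ennreal (\<bar>f x - h x\<bar> powr p) \<partial>M)"
proof -
  define Q where "Q i = A \<inter> B i" for i
  have [measurable]: "\<And>i. i \<in> {..<l} \<Longrightarrow> Q i \<in> sets M" using B(1) by (auto simp: Q_def)
  have [measurable]: "\<And>i. i \<in> {..<l} \<Longrightarrow> B i \<in> sets M" using B(1) by auto
  have [measurable]: "h \<in> borel_measurable M" unfolding h by measurable
  have Q_disj: "disjoint_family_on Q {..<l}"
    using B(2) unfolding Q_def disjoint_family_on_def by blast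
  have h_Q: "h x = a i" if "i < l" "x \<in> Q i" for i x
  proof -
    have "x \<in> B i" using that by (simp add: Q_def)
    show ?thesis unfolding h
      by (rule sum_indicator_disjoint_family[OF B(2) \<open>x \<in> B i\<close> finite_lessThan]) (use that in simp)
  qed
  have "(\<Sum>i<l. ennreal (var_p M p f (Q i) powr p))
      \<le> (\<Sum>i<l. ennreal (2 powr p) * (\<integral>\<^sup>+x\<in>Q i. ennreal (\<bar>f x - a i\<bar> powr p) \<partial>M))"
  proof (intro sum_mono var_p_powr_le_nn_integral[OF p])
    show "emeasure M (Q i) < \<infinity>" for i
      using A_fin by (rule le_less_trans[rotated]) (auto simp: Q_def intro!: emeasure_mono)
  qed auto
  also have "\<dots> = ennreal (2 powr p) * (\<Sum>i<l. \<integral>\<^sup>+x\<in>Q i. ennreal (\<bar>f x - h x\<bar> powr p) \<partial>M)"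
    unfolding sum_distrib_left
    by (intro sum.cong refl arg_cong[where f="\<lambda>t. ennreal (2 powr p) * t"] nn_integral_cong)
      (auto simp: h_Q split: split_indicator)
  also have "(\<Sum>i<l. \<integral>\<^sup>+x\<in>Q i. ennreal (\<bar>f x - h x\<bar> powr p) \<partial>M)
      = (\<integral>\<^sup>+x. ennreal (\<bar>f x - h x\<bar> powr p) * indicator (\<Union>i<l. Q i) x \<partial>M)"
    by (subst nn_integral_sum[symmetric]) (auto simp: indicator_UN_disjoint[OF _ Q_disj] sum_distrib_left)
  also have "\<dots> \<le> (\<integral>\<^sup>+x. ennreal (\<bar>f x - h x\<bar> powr p) \<partial>M)"
    by (intro nn_integral_mono) (auto split: split_indicator)
  finally show ?thesis by (simp add: mult_left_mono Q_def)
qed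

lemma Var_k_le_of_step_approx:
  assumes p: "1 \<le> p" and f: "in_Lp M p f" and h: "h \<in> step_fun_set M p k"
    and err: "Lp_norm M p (\<lambda>x. f x - h x) \<le> \<epsilon>"
  shows "Var_k M p k f \<le> ennreal (2 * \<epsilon>)"
  unfolding Var_k_def
proof (intro SUP_least, clarify)
  fix A assume [measurable]: "A \<in> sets M" and A_fin: "emeasure M A < \<infinity>"
  obtain l B a where h_Lp: "in_Lp M p h" and l: "l \<le> k"
    and B: "\<forall>i<l. B i \<in> sets M" "disjoint_family_on B {..<l}" "(\<Union>i<l. B i) = space M"
    and h_eq: "h = (\<lambda>x. \<Sum>i<l. a i * indicator (B i) x)"
    using h unfolding step_fun_set_def by blast
  have e: "0 \<le> \<epsilon>" using err unfolding Lp_norm_def by (meson order_trans powr_ge_zero)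
  have "(\<Sum>i<l. ennreal (var_p M p f (A \<inter> B i) powr p))
      \<le> ennreal (2 powr p) * (\<integral>\<^sup>+x. ennreal (\<bar>f x - h x\<bar> powr p) \<partial>M)"
    using sum_var_p_powr_le_step_dist[OF p in_Lp_borel_measurable[OF f] B(1,2) _ A_fin h_eq] by simp
  also have "\<dots> \<le> ennreal (2 powr p) * ennreal (\<epsilon> powr p)"
    using err Lp_norm_le_iff[OF _ e integrable_abs_diff_powr[OF p f h_Lp]] p
    by (intro mult_left_mono) auto
  also have "\<dots> = ennreal ((2 * \<epsilon>) powr p)"
    using e by (simp add: powr_mult ennreal_mult)
  finally have var_powr: "var_coll M p f l (\<lambda>i. A \<inter> B i) powr p \<le> (2 * \<epsilon>) powr p"
    using p by (simp add: var_coll_powr sum_ennreal ennreal_le_iff)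
  have "var_coll M p f l (\<lambda>i. A \<inter> B i) \<le> 2 * \<epsilon>"
  proof (rule ccontr)
    assume "\<not> var_coll M p f l (\<lambda>i. A \<inter> B i) \<le> 2 * \<epsilon>"
    then have "(2 * \<epsilon>) powr p < var_coll M p f l (\<lambda>i. A \<inter> B i) powr p"
      using p e by (intro powr_less_mono2) auto
    with var_powr show False by simp
  qed
  have "Var_k_on M p k f A \<le> ennreal (var_coll M p f l (\<lambda>i. A \<inter> B i))"
    unfolding Var_k_on_def
    using l B sets.sets_into_space[of A M]
    by (intro INF_lower2[of "(l, \<lambda>i. A \<inter> B i)"]) (auto simp: disjoint_family_on_def)
  also have "\<dots> \<le> ennreal (2 * \<epsilon>)" by (rule ennreal_leI) fact
  finally show "Var_k_on M p k f A \<le> ennreal (2 * \<epsilon>)" .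
qed

lemma nn_integral_small_values_less:
  assumes p: "0 < p" and f: "in_Lp M p f" and eta: "0 < \<eta>"
  shows "\<exists>\<delta>>0. (\<integral>\<^sup>+x. ennreal (\<bar>f x\<bar> powr p) * indicator {x\<in>space M. \<bar>f x\<bar> \<le> \<delta>} x \<partial>M) < ennreal \<eta>"
proof -
  have [measurable]: "f \<in> borel_measurable M" using f by (rule in_Lp_borel_measurable)
  define F where "F j x = ennreal (\<bar>f x\<bar> powr p) * indicator {x\<in>space M. \<bar>f x\<bar> \<le> inverse (real (Suc j))} x"
    for j x
  have [measurable]: "\<And>j. F j \<in> borel_measurable M" unfolding F_def by measurable
  have "decseq F"
  proof (intro decseq_SucI le_funI)
    fix j x
    have "inverse (real (Suc (Suc j))) \<le> inverse (real (Suc j))" by (simp add: field_simps)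
    then have "\<bar>f x\<bar> \<le> inverse (real (Suc (Suc j))) \<Longrightarrow> \<bar>f x\<bar> \<le> inverse (real (Suc j))"
      by linarith
    then show "F (Suc j) x \<le> F j x"
      unfolding F_def by (auto simp del: of_nat_Suc split: split_indicator)
  qed
  moreover have "(\<integral>\<^sup>+ x. F j x \<partial>M) < \<infinity>" for j
  proof -
    have "(\<integral>\<^sup>+ x. F j x \<partial>M) \<le> (\<integral>\<^sup>+ x. ennreal (\<bar>f x\<bar> powr p) \<partial>M)"
      unfolding F_def by (intro nn_integral_mono) (auto split: split_indicator)
    then show ?thesis using in_Lp_nn_integral_finite[OF f] by (rule le_less_trans)
  qed
  moreover have "(INF j. F j x) = 0" for x
  proof (cases "f x = 0")
    case False
    then obtain j where "inverse (real (Suc j)) < \<bar>f x\<bar>" using reals_Archimedean[of "\<bar>f x\<bar>"] by auto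
    then have "F j x = 0" unfolding F_def by auto
    then show ?thesis by (metis INF_lower2 UNIV_I order_refl le_zero_eq)
  qed (use p in \<open>simp add: F_def\<close>)
  ultimately have "(INF j. integral\<^sup>N M (F j)) < ennreal \<eta>"
    using nn_integral_monotone_convergence_INF_decseq[of F M] eta by simp
  then obtain j where "integral\<^sup>N M (F j) < ennreal \<eta>"
    by (auto simp: INF_less_iff)
  then show ?thesis unfolding F_def by (intro exI[of _ "inverse (real (Suc j))"]) auto
qed

lemma emeasure_abs_greater_finite:
  assumes p: "0 < p" and f: "in_Lp M p f" and d: "0 < \<delta>"
  shows "emeasure M {x\<in>space M. \<delta> < \<bar>f x\<bar>} < \<infinity>"
proof -
  have [measurable]: "f \<in> borel_measurable M" using f by (rule in_Lp_borel_measurable)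
  have "ennreal (\<delta> powr p) * emeasure M {x\<in>space M. \<delta> < \<bar>f x\<bar>}
      = (\<integral>\<^sup>+x. ennreal (\<delta> powr p) * indicator {x\<in>space M. \<delta> < \<bar>f x\<bar>} x \<partial>M)"
    by (simp add: nn_integral_cmult_indicator)
  also have "\<dots> \<le> (\<integral>\<^sup>+ x. ennreal (\<bar>f x\<bar> powr p) \<partial>M)"
    using d p by (intro nn_integral_mono) (auto split: split_indicator intro!: ennreal_leI powr_mono2)
  also have "\<dots> < \<infinity>" using in_Lp_nn_integral_finite[OF f] .
  finally show ?thesis using d by (auto simp: ennreal_mult_less_top)
qed

lemma LIMSEQ_powr_add_inverse:
  fixes \<epsilon> p :: real
  assumes "0 < \<epsilon>"
  shows "(\<lambda>m. (\<epsilon> + inverse (real (Suc m))) powr p) \<longlonglongrightarrow> \<epsilon> powr p"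
proof -
  have "(\<lambda>m. \<epsilon> + inverse (real (Suc m))) \<longlonglongrightarrow> \<epsilon> + 0"
    by (intro tendsto_add tendsto_const LIMSEQ_inverse_real_of_nat)
  then show ?thesis using assms by (intro tendsto_powr') auto
qed

lemma step_approx_of_Var_k_on_space_le:
  assumes p: "1 \<le> p" and f: "in_Lp M p f" and fin: "emeasure M (space M) < \<infinity>"
    and nz: "emeasure M (space M) \<noteq> 0" and V: "Var_k_on M p k f (space M) \<le> ennreal \<epsilon>"
    and e: "0 < \<epsilon>"
  shows "\<exists>h\<in>step_fun_set M p k. Lp_norm M p (\<lambda>x. f x - h x) \<le> \<epsilon>"
proof -
  have "\<exists>a. quant_err M p f k a \<le> ennreal ((\<epsilon> + inverse (real (Suc m))) powr p)" for m
  proof -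
    have "Var_k_on M p k f (space M) < ennreal (\<epsilon> + inverse (real (Suc m)))"
      using e by (intro le_less_trans[OF V] ennreal_lessI add_pos_pos) auto
    from exists_levels_of_Var_k_on_less[OF p f sets.top fin this]
    obtain a where "(\<integral>\<^sup>+x. (INF i\<in>{..<k}. ennreal (\<bar>f x - a i\<bar> powr p)) * indicator (space M) x \<partial>M)
        \<le> ennreal ((\<epsilon> + inverse (real (Suc m))) powr p)" by blast
    moreover have "(\<integral>\<^sup>+x. (INF i\<in>{..<k}. ennreal (\<bar>f x - a i\<bar> powr p)) * indicator (space M) x \<partial>M)
        = quant_err M p f k a"
      unfolding quant_err_def by (intro nn_integral_cong) simp
    ultimately show ?thesis by auto
  qed
  then obtain a where a: "\<And>m. quant_err M p f k (a m) \<le> ennreal ((\<epsilon> + inverse (real (Suc m))) powr p)"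
    by metis
  have lim: "(\<lambda>m. ennreal ((\<epsilon> + inverse (real (Suc m))) powr p)) \<longlonglongrightarrow> ennreal (\<epsilon> powr p)"
    by (intro tendsto_ennrealI LIMSEQ_powr_add_inverse e)
  obtain b where "quant_err M p f k b \<le> ennreal (\<epsilon> powr p)"
    using exists_levels_quant_err_le_limit[where a=a, OF p in_Lp_borel_measurable[OF f] nz a lim] by auto
  then show ?thesis using step_fun_of_quant_err[OF p f nz order_refl] e fin by auto
qed

lemma exists_levels_with_zero_of_Var_k_le:
  assumes p: "1 \<le> p" and f: "in_Lp M p f"
    and V: "Var_k M p k f \<le> ennreal \<epsilon>" and e: "0 < \<epsilon>" and eta: "0 < \<eta>"
  shows "\<exists>a. quant_err M p f (Suc k) a \<le> ennreal ((\<epsilon> + \<eta>) powr p + \<eta>) \<and> a k = 0"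
proof -
  \<comment> \<open>k levels fitted on the set where |f| > \<delta>, which has finite measure, plus the level 0.\<close>
  have [measurable]: "f \<in> borel_measurable M" using f by (rule in_Lp_borel_measurable)
  obtain \<delta> where "0 < \<delta>" and small:
    "(\<integral>\<^sup>+x. ennreal (\<bar>f x\<bar> powr p) * indicator {x\<in>space M. \<bar>f x\<bar> \<le> \<delta>} x \<partial>M) < ennreal \<eta>"
    using nn_integral_small_values_less[of p M f \<eta>] p f eta by auto
  define A where "A = {x\<in>space M. \<delta> < \<bar>f x\<bar>}"
  have [measurable]: "A \<in> sets M" unfolding A_def by measurable
  have A_fin: "emeasure M A < \<infinity>"
    unfolding A_def using emeasure_abs_greater_finite[of p M f \<delta>] p f \<open>0 < \<delta>\<close> by auto
  have "Var_k_on M p k f A \<le> Var_k M p k f"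
    unfolding Var_k_def using A_fin by (intro SUP_upper) auto
  also have "\<dots> < ennreal (\<epsilon> + \<eta>)"
    using e eta by (intro le_less_trans[OF V] ennreal_lessI) auto
  finally obtain a0 where a0: "(\<integral>\<^sup>+x. (INF i\<in>{..<k}. ennreal (\<bar>f x - a0 i\<bar> powr p)) * indicator A x \<partial>M)
      \<le> ennreal ((\<epsilon> + \<eta>) powr p)"
    using exists_levels_of_Var_k_on_less[OF p f \<open>A \<in> sets M\<close> A_fin] by blast
  define a where "a = a0(k := 0)"
  have "quant_err M p f (Suc k) a \<le> (\<integral>\<^sup>+x. (INF i\<in>{..<k}. ennreal (\<bar>f x - a0 i\<bar> powr p)) * indicator A x
      + ennreal (\<bar>f x\<bar> powr p) * indicator {x\<in>space M. \<bar>f x\<bar> \<le> \<delta>} x \<partial>M)"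
    unfolding quant_err_def
  proof (intro nn_integral_mono)
    fix x assume "x \<in> space M"
    have "(INF i\<in>{..<Suc k}. ennreal (\<bar>f x - a i\<bar> powr p)) \<le> (INF i\<in>{..<k}. ennreal (\<bar>f x - a0 i\<bar> powr p))"
      by (intro INF_superset_mono) (auto simp: a_def)
    moreover have "(INF i\<in>{..<Suc k}. ennreal (\<bar>f x - a i\<bar> powr p)) \<le> ennreal (\<bar>f x\<bar> powr p)"
      by (rule INF_lower2[of k]) (auto simp: a_def)
    ultimately show "(INF i\<in>{..<Suc k}. ennreal (\<bar>f x - a i\<bar> powr p))
        \<le> (INF i\<in>{..<k}. ennreal (\<bar>f x - a0 i\<bar> powr p)) * indicator A x
          + ennreal (\<bar>f x\<bar> powr p) * indicator {x\<in>space M. \<bar>f x\<bar> \<le> \<delta>} x"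
      using \<open>x \<in> space M\<close> by (auto simp: A_def not_less split: split_indicator)
  qed
  also have "\<dots> = (\<integral>\<^sup>+x. (INF i\<in>{..<k}. ennreal (\<bar>f x - a0 i\<bar> powr p)) * indicator A x \<partial>M)
      + (\<integral>\<^sup>+x. ennreal (\<bar>f x\<bar> powr p) * indicator {x\<in>space M. \<bar>f x\<bar> \<le> \<delta>} x \<partial>M)"
    by (rule nn_integral_add) measurable
  also have "\<dots> \<le> ennreal ((\<epsilon> + \<eta>) powr p) + ennreal \<eta>"
    using a0 small by (intro add_mono) auto
  finally show ?thesis using eta by (auto simp: a_def)
qed

lemma step_approx_of_Var_k_le:
  assumes p: "1 \<le> p" and f: "in_Lp M p f" and nz: "emeasure M (space M) \<noteq> 0"
    and V: "Var_k M p k f \<le> ennreal \<epsilon>" and e: "0 < \<epsilon>"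
  shows "\<exists>h\<in>step_fun_set M p (Suc k). Lp_norm M p (\<lambda>x. f x - h x) \<le> \<epsilon>"
proof -
  have "\<forall>m. \<exists>a. quant_err M p f (Suc k) a
      \<le> ennreal ((\<epsilon> + inverse (real (Suc m))) powr p + inverse (real (Suc m))) \<and> a k = 0"
    using exists_levels_with_zero_of_Var_k_le[OF p f V e] by simp
  then obtain a where a: "\<And>m. quant_err M p f (Suc k) (a m)
      \<le> ennreal ((\<epsilon> + inverse (real (Suc m))) powr p + inverse (real (Suc m)))"
    and a_k: "\<And>m. a m k = 0"
    by (auto dest!: choice)
  have "(\<lambda>m. (\<epsilon> + inverse (real (Suc m))) powr p + inverse (real (Suc m))) \<longlonglongrightarrow> \<epsilon> powr p + 0"
    by (intro tendsto_add LIMSEQ_powr_add_inverse e LIMSEQ_inverse_real_of_nat)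
  then have lim: "(\<lambda>m. ennreal ((\<epsilon> + inverse (real (Suc m))) powr p + inverse (real (Suc m))))
      \<longlonglongrightarrow> ennreal (\<epsilon> powr p)"
    by (intro tendsto_ennrealI) simp
  obtain b where b: "quant_err M p f (Suc k) b \<le> ennreal (\<epsilon> powr p)" and "b k = 0"
    using exists_levels_quant_err_le_limit[where a=a, OF p in_Lp_borel_measurable[OF f] nz a lim] a_k
    by auto
  then have "\<exists>i<Suc k. b i = 0" by blast
  then show ?thesis using step_fun_of_quant_err[OF p f nz order_refl b] e by auto
qed

lemma Var_k_on_antimono: "k \<le> k' \<Longrightarrow> Var_k_on M p k' f A \<le> Var_k_on M p k f A"
  unfolding Var_k_on_def by (rule INF_superset_mono) auto

lemma Var_k_antimono: "k \<le> k' \<Longrightarrow> Var_k M p k' f \<le> Var_k M p k f"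
  unfolding Var_k_def by (intro SUP_mono) (auto intro: Var_k_on_antimono)

lemma Var_k_on_space_le_Var_k: "emeasure M (space M) < \<infinity> \<Longrightarrow> Var_k_on M p k f (space M) \<le> Var_k M p k f"
  unfolding Var_k_def by (intro SUP_upper) auto

section \<open>Approximation numbers\<close>

definition least_steps :: "(real \<Rightarrow> nat \<Rightarrow> bool) \<Rightarrow> real \<Rightarrow> enat" where
  "least_steps P \<epsilon> = Inf {enat k | k. k \<ge> 1 \<and> P \<epsilon> k}"

definition least_index_le :: "(nat \<Rightarrow> ennreal) \<Rightarrow> real \<Rightarrow> nat" where
  "least_index_le S \<epsilon> = (LEAST k. k \<ge> 1 \<and> S k \<le> ennreal \<epsilon>)"

text \<open>
  Abstract form of the comparison: S k plays the role of sup_f Var_{p,k}(f) (or of its version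
  on \<Omega>), P \<epsilon> k says that G_{p,k} approximates the family within \<epsilon>, so that least_steps P
  is N_{p,\<epsilon>} and least_index_le S is r_\<epsilon> (or m_\<epsilon>).
\<close>

locale approximation_rates =
  fixes S :: "nat \<Rightarrow> ennreal" and P :: "real \<Rightarrow> nat \<Rightarrow> bool" and d :: nat
  assumes antimono_S: "antimono S"
    and S_le_of_P: "\<And>\<epsilon> k. 0 < \<epsilon> \<Longrightarrow> P \<epsilon> k \<Longrightarrow> S k \<le> ennreal (2 * \<epsilon>)"
    and P_of_S_le: "\<And>\<epsilon> k. 0 < \<epsilon> \<Longrightarrow> S k \<le> ennreal \<epsilon> \<Longrightarrow> P \<epsilon> (k + d)"
begin

abbreviation N :: "real \<Rightarrow> enat" where "N \<equiv> least_steps P"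

abbreviation R :: "real \<Rightarrow> nat" where "R \<equiv> least_index_le S"

lemma N_le: "1 \<le> k \<Longrightarrow> P \<epsilon> k \<Longrightarrow> N \<epsilon> \<le> enat k"
  unfolding least_steps_def by (intro Inf_lower) auto

lemma N_finiteE:
  assumes "N \<epsilon> \<noteq> \<infinity>"
  obtains k where "N \<epsilon> = enat k" "1 \<le> k" "P \<epsilon> k"
proof -
  define K where "K = {enat k | k. k \<ge> 1 \<and> P \<epsilon> k}"
  have "K \<noteq> {}" using assms unfolding least_steps_def K_def[symmetric] by (auto simp: Inf_enat_def)
  then have "N \<epsilon> \<in> K" unfolding least_steps_def K_def[symmetric] Inf_enat_def by (auto intro: LeastI_ex)
  then show ?thesis using that unfolding K_def by auto
qed

lemma tendsto_zero_iff: "S \<longlonglongrightarrow> 0 \<longleftrightarrow> (\<forall>\<epsilon>>0. \<exists>k. S k \<le> ennreal \<epsilon>)"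
proof -
  have "S \<longlonglongrightarrow> (INF k. S k)"
    using antimono_S by (rule LIMSEQ_INF)
  then have "S \<longlonglongrightarrow> 0 \<longleftrightarrow> (INF k. S k) = 0"
    using LIMSEQ_unique by auto
  also have "\<dots> \<longleftrightarrow> (\<forall>\<epsilon>>0. \<exists>k. S k \<le> ennreal \<epsilon>)"
  proof
    assume INF_0: "(INF k. S k) = 0"
    show "\<forall>\<epsilon>>0. \<exists>k. S k \<le> ennreal \<epsilon>"
    proof (intro allI impI)
      fix \<epsilon> :: real assume "0 < \<epsilon>"
      then have "(INF k. S k) < ennreal \<epsilon>" using INF_0 by simp
      then show "\<exists>k. S k \<le> ennreal \<epsilon>" by (auto simp: INF_less_iff intro: less_imp_le)
    qed
  next
    assume small: "\<forall>\<epsilon>>0. \<exists>k. S k \<le> ennreal \<epsilon>"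
    have "(INF k. S k) \<le> 0"
    proof (rule ennreal_le_epsilon)
      fix \<epsilon> :: real assume "0 < \<epsilon>"
      then show "(INF k. S k) \<le> 0 + ennreal \<epsilon>" using small by (auto intro: INF_lower2)
    qed
    then show "(INF k. S k) = 0" by simp
  qed
  finally show ?thesis .
qed

lemma small_index:
  assumes "S \<longlonglongrightarrow> 0" "0 < \<epsilon>"
  obtains k where "1 \<le> k" "S k \<le> ennreal \<epsilon>"
proof -
  obtain k where "S k \<le> ennreal \<epsilon>" using assms tendsto_zero_iff by blast
  moreover have "S (Suc k) \<le> S k" using antimono_S by (rule antimonoD) simp
  ultimately show ?thesis using that[of "Suc k"] by simp
qed

lemma N_finite_iff: "(\<forall>\<epsilon>>0. N \<epsilon> \<noteq> \<infinity>) \<longleftrightarrow> S \<longlonglongrightarrow> 0"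
proof
  assume fin: "\<forall>\<epsilon>>0. N \<epsilon> \<noteq> \<infinity>"
  show "S \<longlonglongrightarrow> 0"
    unfolding tendsto_zero_iff
  proof (intro allI impI)
    fix \<epsilon> :: real assume "0 < \<epsilon>"
    then have "N (\<epsilon> / 2) \<noteq> \<infinity>" using fin by simp
    then obtain k where "P (\<epsilon> / 2) k" by (rule N_finiteE)
    then have "S k \<le> ennreal (2 * (\<epsilon> / 2))" using \<open>0 < \<epsilon>\<close> by (intro S_le_of_P) auto
    then show "\<exists>k. S k \<le> ennreal \<epsilon>" by auto
  qed
next
  assume "S \<longlonglongrightarrow> 0"
  show "\<forall>\<epsilon>>0. N \<epsilon> \<noteq> \<infinity>"
  proof (intro allI impI)
    fix \<epsilon> :: real assume "0 < \<epsilon>"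
    obtain k where "1 \<le> k" "S k \<le> ennreal \<epsilon>"
      using \<open>S \<longlonglongrightarrow> 0\<close> \<open>0 < \<epsilon>\<close> by (rule small_index)
    then have "N \<epsilon> \<le> enat (k + d)" using P_of_S_le \<open>0 < \<epsilon>\<close> by (intro N_le) auto
    then show "N \<epsilon> \<noteq> \<infinity>" by (cases "N \<epsilon>") auto
  qed
qed

lemma R_le: "1 \<le> k \<Longrightarrow> S k \<le> ennreal \<epsilon> \<Longrightarrow> R \<epsilon> \<le> k"
  unfolding least_index_le_def by (rule Least_le) simp

lemma R_spec:
  assumes "S \<longlonglongrightarrow> 0" "0 < \<epsilon>"
  shows "1 \<le> R \<epsilon>" "S (R \<epsilon>) \<le> ennreal \<epsilon>"
proof -
  obtain k where k: "1 \<le> k" "S k \<le> ennreal \<epsilon>" using assms by (rule small_index)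
  have "1 \<le> R \<epsilon> \<and> S (R \<epsilon>) \<le> ennreal \<epsilon>"
    unfolding least_index_le_def by (rule LeastI[of "\<lambda>k. 1 \<le> k \<and> S k \<le> ennreal \<epsilon>" k]) (use k in simp)
  then show "1 \<le> R \<epsilon>" "S (R \<epsilon>) \<le> ennreal \<epsilon>" by auto
qed

lemma R_double_le_N:
  assumes "0 < \<epsilon>" "N \<epsilon> \<noteq> \<infinity>"
  shows "enat (R (2 * \<epsilon>)) \<le> N \<epsilon>"
proof -
  obtain k where "N \<epsilon> = enat k" "1 \<le> k" "P \<epsilon> k" using assms(2) by (rule N_finiteE)
  moreover from this have "R (2 * \<epsilon>) \<le> k" by (intro R_le S_le_of_P assms(1))
  ultimately show ?thesis by simp
qed

lemma N_le_R_add: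
  assumes "S \<longlonglongrightarrow> 0" "0 < \<epsilon>"
  shows "N \<epsilon> \<le> enat (R \<epsilon> + d)"
  using R_spec[OF assms] by (intro N_le P_of_S_le[OF assms(2)]) auto

lemma R_le_of_le:
  assumes "\<And>k. T k \<le> S k" "S \<longlonglongrightarrow> 0" "0 < \<epsilon>"
  shows "least_index_le T \<epsilon> \<le> R \<epsilon>"
proof -
  have "1 \<le> R \<epsilon>" "T (R \<epsilon>) \<le> ennreal \<epsilon>"
    using R_spec[OF assms(2,3)] order_trans[OF assms(1)] by auto
  then show ?thesis unfolding least_index_le_def[of T] by (intro Least_le) simp
qed

end

definition approx_by_steps :: "'a measure \<Rightarrow> real \<Rightarrow> ('a \<Rightarrow> real) set \<Rightarrow> real \<Rightarrow> nat \<Rightarrow> bool" where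
  "approx_by_steps M p \<A> \<epsilon> k \<longleftrightarrow>
     (\<forall>f\<in>\<A>. \<exists>h\<in>step_fun_set M p k. Lp_norm M p (\<lambda>x. f x - h x) \<le> \<epsilon>)"

lemma N_approx_eq: "N_approx M p \<epsilon> \<A> = least_steps (approx_by_steps M p \<A>) \<epsilon>"
  by (simp add: N_approx_def least_steps_def approx_by_steps_def)

lemma r_eps_eq: "r_eps M p \<A> \<epsilon> = least_index_le (\<lambda>k. SUP f\<in>\<A>. Var_k M p k f) \<epsilon>"
  by (simp add: r_eps_def least_index_le_def)

lemma m_eps_eq: "m_eps M p \<A> \<epsilon> = least_index_le (\<lambda>k. SUP f\<in>\<A>. Var_k_on M p k f (space M)) \<epsilon>"
  by (simp add: m_eps_def least_index_le_def)

context
  fixes M :: "'a measure" and p :: real and \<A> :: "('a \<Rightarrow> real) set"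
  assumes nz: "emeasure M (space M) \<noteq> 0" and p: "1 \<le> p" and A: "\<forall>f\<in>\<A>. in_Lp M p f"
begin

lemma approximation_rates_Var_k:
  "approximation_rates (\<lambda>k. SUP f\<in>\<A>. Var_k M p k f) (approx_by_steps M p \<A>) 1"
proof
  show "antimono (\<lambda>k. SUP f\<in>\<A>. Var_k M p k f)"
    by (intro antimonoI SUP_mono) (blast intro: Var_k_antimono)
  show "(SUP f\<in>\<A>. Var_k M p k f) \<le> ennreal (2 * \<epsilon>)" if "approx_by_steps M p \<A> \<epsilon> k" for \<epsilon> k
    using that A unfolding approx_by_steps_def
    by (auto intro!: SUP_least intro: Var_k_le_of_step_approx[OF p])
  show "approx_by_steps M p \<A> \<epsilon> (k + 1)"
    if "0 < \<epsilon>" "(SUP f\<in>\<A>. Var_k M p k f) \<le> ennreal \<epsilon>" for \<epsilon> k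
    using that A step_approx_of_Var_k_le[OF p _ nz] unfolding approx_by_steps_def
    by (auto simp: SUP_le_iff)
qed

lemma unif_approx_iff_Var_k_tendsto_0:
  "unif_approx M p \<A> \<longleftrightarrow> (\<lambda>k. SUP f\<in>\<A>. Var_k M p k f) \<longlonglongrightarrow> 0"
  unfolding unif_approx_def N_approx_eq
  by (rule approximation_rates.N_finite_iff[OF approximation_rates_Var_k])

lemma r_eps_double_le_N_approx:
  "unif_approx M p \<A> \<Longrightarrow> 0 < \<epsilon> \<Longrightarrow> enat (r_eps M p \<A> (2 * \<epsilon>)) \<le> N_approx M p \<epsilon> \<A>"
  unfolding unif_approx_def N_approx_eq r_eps_eq
  by (rule approximation_rates.R_double_le_N[OF approximation_rates_Var_k]) auto

lemma N_approx_le_r_eps_add_1: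
  "unif_approx M p \<A> \<Longrightarrow> 0 < \<epsilon> \<Longrightarrow> N_approx M p \<epsilon> \<A> \<le> enat (r_eps M p \<A> \<epsilon> + 1)"
  unfolding unif_approx_iff_Var_k_tendsto_0 N_approx_eq r_eps_eq
  by (rule approximation_rates.N_le_R_add[OF approximation_rates_Var_k])

context
  assumes fin: "emeasure M (space M) < \<infinity>"
begin

lemma approximation_rates_Var_k_on_space:
  "approximation_rates (\<lambda>k. SUP f\<in>\<A>. Var_k_on M p k f (space M)) (approx_by_steps M p \<A>) 0"
proof
  show "antimono (\<lambda>k. SUP f\<in>\<A>. Var_k_on M p k f (space M))"
    by (intro antimonoI SUP_mono) (blast intro: Var_k_on_antimono)
  show "(SUP f\<in>\<A>. Var_k_on M p k f (space M)) \<le> ennreal (2 * \<epsilon>)"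
    if "approx_by_steps M p \<A> \<epsilon> k" for \<epsilon> k
    using that A unfolding approx_by_steps_def
    by (auto intro!: SUP_least order_trans[OF Var_k_on_space_le_Var_k[OF fin]]
      intro: Var_k_le_of_step_approx[OF p])
  show "approx_by_steps M p \<A> \<epsilon> (k + 0)"
    if "0 < \<epsilon>" "(SUP f\<in>\<A>. Var_k_on M p k f (space M)) \<le> ennreal \<epsilon>" for \<epsilon> k
    using that A step_approx_of_Var_k_on_space_le[OF p _ fin nz] unfolding approx_by_steps_def
    by (auto simp: SUP_le_iff)
qed

lemma unif_approx_iff_Var_k_on_space_tendsto_0:
  "unif_approx M p \<A> \<longleftrightarrow> (\<lambda>k. SUP f\<in>\<A>. Var_k_on M p k f (space M)) \<longlonglongrightarrow> 0"
  unfolding unif_approx_def N_approx_eq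
  by (rule approximation_rates.N_finite_iff[OF approximation_rates_Var_k_on_space])

lemma N_approx_le_m_eps:
  "unif_approx M p \<A> \<Longrightarrow> 0 < \<epsilon> \<Longrightarrow> N_approx M p \<epsilon> \<A> \<le> enat (m_eps M p \<A> \<epsilon>)"
  unfolding unif_approx_iff_Var_k_on_space_tendsto_0 N_approx_eq m_eps_eq
  using approximation_rates.N_le_R_add[OF approximation_rates_Var_k_on_space] by simp

lemma m_eps_le_r_eps:
  "unif_approx M p \<A> \<Longrightarrow> 0 < \<epsilon> \<Longrightarrow> m_eps M p \<A> \<epsilon> \<le> r_eps M p \<A> \<epsilon>"
  unfolding unif_approx_iff_Var_k_tendsto_0 m_eps_eq r_eps_eq
  by (rule approximation_rates.R_le_of_le[OF approximation_rates_Var_k])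
    (use Var_k_on_space_le_Var_k[OF fin] in \<open>auto intro: SUP_mono'\<close>)

end

end

theorem theorem4p12:
  fixes M :: "'a measure" and p :: real and \<A> :: "('a \<Rightarrow> real) set"
  assumes nonzero: "emeasure M (space M) \<noteq> 0"
    and p: "1 \<le> p"
    and A: "\<forall>f\<in>\<A>. in_Lp M p f"
  shows "(unif_approx M p \<A> \<longleftrightarrow> ((\<lambda>k. SUP f\<in>\<A>. Var_k M p k f) \<longlonglongrightarrow> 0))
    \<and> (unif_approx M p \<A> \<longrightarrow> (\<forall>\<epsilon>>0.
          enat (r_eps M p \<A> (2 * \<epsilon>)) \<le> N_approx M p \<epsilon> \<A> \<and>
          N_approx M p \<epsilon> \<A> \<le> enat (r_eps M p \<A> \<epsilon> + 1)))
    \<and> (emeasure M (space M) < \<infinity> \<longrightarrow>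
         (unif_approx M p \<A> \<longleftrightarrow> ((\<lambda>k. SUP f\<in>\<A>. Var_k_on M p k f (space M)) \<longlonglongrightarrow> 0))
       \<and> (unif_approx M p \<A> \<longrightarrow> (\<forall>\<epsilon>>0.
          m_eps M p \<A> (2 * \<epsilon>) \<le> r_eps M p \<A> (2 * \<epsilon>) \<and>
          enat (r_eps M p \<A> (2 * \<epsilon>)) \<le> N_approx M p \<epsilon> \<A> \<and>
          N_approx M p \<epsilon> \<A> \<le> enat (m_eps M p \<A> \<epsilon>) \<and>
          m_eps M p \<A> \<epsilon> \<le> r_eps M p \<A> \<epsilon>)))"
proof -
  have "0 < 2 * \<epsilon>" if "0 < \<epsilon>" for \<epsilon> :: real using that by simp
  then show ?thesis
    using unif_approx_iff_Var_k_tendsto_0[OF nonzero p A] r_eps_double_le_N_approx[OF nonzero p A]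
      N_approx_le_r_eps_add_1[OF nonzero p A] unif_approx_iff_Var_k_on_space_tendsto_0[OF nonzero p A]
      N_approx_le_m_eps[OF nonzero p A] m_eps_le_r_eps[OF nonzero p A]
    by blast
qed

end
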